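(* For every $\theta>1/3$ there is a constant $C(\theta)<\infty$ such that for every cubic polynomial $p(x)=x^3+ex^2+fx+g$ with $e,f,g\in\mathbb R$, $$\sum_{m\in\mathbb Z}\frac{1}{\langle p(m)\rangle^{\theta}}\le C(\theta).$$
   Context: $\langle x\rangle:=1+|x|$. *)

theory Defs
  imports "HOL-Analysis.Analysis"
begin

definition jbr :: "real \<Rightarrow> real" where
  "jbr x = 1 + \<bar>x\<bar>"

end

theory Submission
  imports Defs "HOL-Real_Asymp.Real_Asymp"
begin

text \<open>
  The third divided difference of a monic cubic p at any four points is 1. If the points are
  integers with consecutive gaps at least k, every denominator in it has modulus at least 2k^3,
  so |p| \<ge> k^3/2 at one of them. Hence among any 3k+1 integers p has a value of modulus at least
  k^3/2, and removing such points one at a time bounds every finite partial sum of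
  \<langle>p(m)\<rangle>^-\<theta> by the sum over n of (1 + (n div 3)^3/2)^-\<theta>, which converges for
  \<theta> > 1/3 and does not depend on the coefficients.
\<close>

lemma monic_cubic_third_divided_difference:
  fixes x0 x1 x2 x3 e f g :: real
  assumes "x0 \<noteq> x1" "x0 \<noteq> x2" "x0 \<noteq> x3" "x1 \<noteq> x2" "x1 \<noteq> x3" "x2 \<noteq> x3"
  shows "(x0^3 + e*x0^2 + f*x0 + g) / ((x0-x1)*(x0-x2)*(x0-x3))
       + (x1^3 + e*x1^2 + f*x1 + g) / ((x1-x0)*(x1-x2)*(x1-x3))
       + (x2^3 + e*x2^2 + f*x2 + g) / ((x2-x0)*(x2-x1)*(x2-x3))
       + (x3^3 + e*x3^2 + f*x3 + g) / ((x3-x0)*(x3-x1)*(x3-x2)) = 1"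
proof -
  have "x0 - x1 \<noteq> 0" "x0 - x2 \<noteq> 0" "x0 - x3 \<noteq> 0" "x1 - x2 \<noteq> 0" "x1 - x3 \<noteq> 0" "x2 - x3 \<noteq> 0"
       "x1 - x0 \<noteq> 0" "x2 - x0 \<noteq> 0" "x3 - x0 \<noteq> 0" "x2 - x1 \<noteq> 0" "x3 - x1 \<noteq> 0" "x3 - x2 \<noteq> 0"
    using assms by auto
  then show ?thesis
    \<comment> \<open>the hypotheses are only needed to clear denominators; \<open>algebra\<close> fails in their presence\<close>
    by (simp add: divide_simps) ((thin_tac "_")+, algebra)
qed

lemma abs_mult3_ge:
  fixes a b c K :: real
  assumes "0 \<le> K" "K \<le> \<bar>a\<bar>" "K \<le> \<bar>b\<bar>" "K \<le> \<bar>c\<bar>"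
    and "2*K \<le> \<bar>a\<bar> \<or> 2*K \<le> \<bar>b\<bar> \<or> 2*K \<le> \<bar>c\<bar>"
  shows "2 * K^3 \<le> \<bar>a*b*c\<bar>"
proof -
  have "(2*K) * K * K \<le> \<bar>a\<bar> * \<bar>b\<bar> * \<bar>c\<bar>"
    using assms(5)
  proof (elim disjE)
    assume "2*K \<le> \<bar>a\<bar>"
    then show ?thesis using assms by (intro mult_mono) auto
  next
    assume "2*K \<le> \<bar>b\<bar>"
    then have "K * (2*K) * K \<le> \<bar>a\<bar> * \<bar>b\<bar> * \<bar>c\<bar>" using assms by (intro mult_mono) auto
    then show ?thesis by (simp add: mult_ac)
  next
    assume "2*K \<le> \<bar>c\<bar>"
    then have "K * K * (2*K) \<le> \<bar>a\<bar> * \<bar>b\<bar> * \<bar>c\<bar>" using assms by (intro mult_mono) auto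
    then show ?thesis by (simp add: mult_ac)
  qed
  then show ?thesis by (simp add: abs_mult power3_eq_cube mult_ac)
qed

lemma monic_cubic_bound_at_spread_points:
  fixes x0 x1 x2 x3 e f g K T :: real
  assumes K: "0 < K" "x0 + K \<le> x1" "x1 + K \<le> x2" "x2 + K \<le> x3"
    and bound: "\<And>x. x \<in> {x0, x1, x2, x3} \<Longrightarrow> \<bar>x^3 + e*x^2 + f*x + g\<bar> \<le> T"
  shows "K^3 \<le> 2 * T"
proof -
  define p where "p x = x^3 + e*x^2 + f*x + g" for x
  have term_bound: "\<bar>p x / (a*b*c)\<bar> \<le> T / (2*K^3)"
    if "x \<in> {x0, x1, x2, x3}" "K \<le> \<bar>a\<bar>" "K \<le> \<bar>b\<bar>" "K \<le> \<bar>c\<bar>"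
       "2*K \<le> \<bar>a\<bar> \<or> 2*K \<le> \<bar>b\<bar> \<or> 2*K \<le> \<bar>c\<bar>" for x a b c
  proof -
    have "2 * K^3 \<le> \<bar>a*b*c\<bar>" using K that by (intro abs_mult3_ge) auto
    moreover have "\<bar>p x\<bar> \<le> T" using bound that(1) by (simp add: p_def)
    ultimately show ?thesis using K by (simp add: abs_divide frac_le)
  qed
  have "1 = p x0 / ((x0-x1)*(x0-x2)*(x0-x3)) + p x1 / ((x1-x0)*(x1-x2)*(x1-x3))
         + p x2 / ((x2-x0)*(x2-x1)*(x2-x3)) + p x3 / ((x3-x0)*(x3-x1)*(x3-x2))"
    unfolding p_def using K by (intro monic_cubic_third_divided_difference[symmetric]) auto
  also have "\<dots> \<le> 4 * (T / (2*K^3))"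
  proof -
    have "\<bar>p x0 / ((x0-x1)*(x0-x2)*(x0-x3))\<bar> \<le> T / (2*K^3)"
         "\<bar>p x1 / ((x1-x0)*(x1-x2)*(x1-x3))\<bar> \<le> T / (2*K^3)"
         "\<bar>p x2 / ((x2-x0)*(x2-x1)*(x2-x3))\<bar> \<le> T / (2*K^3)"
         "\<bar>p x3 / ((x3-x0)*(x3-x1)*(x3-x2))\<bar> \<le> T / (2*K^3)"
      using K by - (rule term_bound; auto simp: abs_if)+
    then show ?thesis by (simp only: abs_le_iff) linarith
  qed
  finally show ?thesis using K by (simp add: field_simps)
qed

lemma sorted_wrt_less_nth_diff_ge:
  fixes xs :: "int list"
  assumes "sorted_wrt (<) xs" "i \<le> j" "j < length xs"
  shows "xs ! i + int (j - i) \<le> xs ! j"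
  using assms(2,3)
proof (induction j)
  case 0
  then show ?case by simp
next
  case (Suc j)
  show ?case
  proof (cases "i = Suc j")
    case False
    then have "xs ! i + int (j - i) \<le> xs ! j" using Suc by simp
    moreover have "xs ! j < xs ! Suc j"
      using assms(1) Suc.prems by (simp add: sorted_wrt_iff_nth_less)
    ultimately show ?thesis using Suc.prems False by linarith
  qed simp
qed

lemma int_set_obtain_spread_points:
  fixes G :: "int set"
  assumes "finite G" "3*k + 1 \<le> card G"
  obtains y0 y1 y2 y3 where "{y0, y1, y2, y3} \<subseteq> G"
    "y0 + int k \<le> y1" "y1 + int k \<le> y2" "y2 + int k \<le> y3"
proof -
  define xs where "xs = sorted_list_of_set G"
  have sorted: "sorted_wrt (<) xs" and len: "length xs = card G" and set: "set xs = G"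
    using assms(1) by (simp_all add: xs_def)
  have index: "i*k < length xs" if "i \<le> 3" for i
  proof -
    have "i*k \<le> 3*k" using that by simp
    then show ?thesis using assms(2) len by linarith
  qed
  have in_G: "xs ! (i*k) \<in> G" if "i \<le> 3" for i
    using index[OF that] set nth_mem by blast
  have gap: "xs ! (i*k) + int k \<le> xs ! ((i+1)*k)" if "i < 3" for i
    using sorted_wrt_less_nth_diff_ge[OF sorted, of "i*k" "(i+1)*k"] index[of "i+1"] that by simp
  show ?thesis
    using in_G[of 0] in_G[of 1] in_G[of 2] in_G[of 3] gap[of 0] gap[of 1] gap[of 2]
    by (intro that[of "xs ! (0*k)" "xs ! (1*k)" "xs ! (2*k)" "xs ! (3*k)"]) (simp_all add: mult_2)
qed

lemma monic_cubic_bound_on_int_set: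
  fixes G :: "int set" and e f g T :: real
  assumes "finite G" "3*k + 1 \<le> card G"
    and bound: "\<And>m. m \<in> G \<Longrightarrow> \<bar>of_int m ^ 3 + e * of_int m ^ 2 + f * of_int m + g\<bar> \<le> T"
  shows "real k ^ 3 \<le> 2 * T"
proof (cases "k = 0")
  case True
  obtain m where "m \<in> G" using assms(2) by fastforce
  with bound have "0 \<le> T" by fastforce
  with True show ?thesis by simp
next
  case False
  obtain y0 y1 y2 y3 where "{y0, y1, y2, y3} \<subseteq> G"
    "y0 + int k \<le> y1" "y1 + int k \<le> y2" "y2 + int k \<le> y3"
    using int_set_obtain_spread_points[OF assms(1,2)] .
  then show ?thesis
    using False bound
    by (intro monic_cubic_bound_at_spread_points[of "real k" "of_int y0" "of_int y1" "of_int y2" "of_int y3"])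
       auto
qed

lemma sum_le_sum_lessThan_card_if_greedy:
  fixes w :: "'a \<Rightarrow> real" and b :: "nat \<Rightarrow> real"
  assumes "finite F"
    and greedy: "\<And>H. H \<subseteq> F \<Longrightarrow> H \<noteq> {} \<Longrightarrow> \<exists>x\<in>H. w x \<le> b (card H - 1)"
  shows "sum w F \<le> (\<Sum>i<card F. b i)"
  using assms(1)
proof (induction rule: finite_remove_induct)
  case empty
  then show ?case by simp
next
  case (remove H)
  obtain x where x: "x \<in> H" "w x \<le> b (card H - 1)"
    using greedy[OF remove(3,2)] by blast
  have card: "card H = Suc (card (H - {x}))"
    using remove(1) x(1) by (metis card_Suc_Diff1)
  have "sum w H = w x + sum w (H - {x})"
    using remove(1) x(1) by (simp add: sum.remove)
  also have "\<dots> \<le> b (card (H - {x})) + (\<Sum>i<card (H - {x}). b i)"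
    using x(2) remove.IH[OF x(1)] card by simp
  also have "\<dots> = (\<Sum>i<card H. b i)"
    using card by simp
  finally show ?case .
qed

lemma sum_lessThan_div_le_suminf:
  fixes c :: "nat \<Rightarrow> real"
  assumes "summable c" "\<And>k. 0 \<le> c k" "0 < d"
  shows "(\<Sum>i<n. c (i div d)) \<le> d * suminf c"
proof -
  have "(\<Sum>i<n. c (i div d)) \<le> (\<Sum>i<n*d. c (i div d))"
    using assms by (intro sum_mono2) auto
  also have "\<dots> = (\<Sum>m<n. \<Sum>i\<in>{m*d..<m*d+d}. c (i div d))"
    by (rule sum.nat_group[symmetric])
  also have "\<dots> = (\<Sum>m<n. d * c m)"
  proof (rule sum.cong)
    fix m
    have "i div d = m" if "i \<in> {m*d..<m*d+d}" for i
      using that assms(3) by (auto intro: div_nat_eqI simp: mult.commute)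
    then show "(\<Sum>i\<in>{m*d..<m*d+d}. c (i div d)) = d * c m" by simp
  qed simp
  also have "\<dots> \<le> d * suminf c"
    using assms by (simp add: sum_distrib_left[symmetric] sum_le_suminf)
  finally show ?thesis .
qed

lemma summable_inverse_powr_cube:
  fixes \<theta> :: real
  assumes "\<theta> > 1/3"
  shows "summable (\<lambda>k::nat. 1 / (1 + real k ^ 3 / 2) powr \<theta>)"
proof (rule summable_comparison_test_bigo)
  show "summable (\<lambda>k. norm (real k powr (-3*\<theta>)))"
    using assms by (simp add: summable_real_powr_iff)
  show "(\<lambda>k::nat. 1 / (1 + real k ^ 3 / 2) powr \<theta>) \<in> O(\<lambda>k. real k powr (-3*\<theta>))"
    using assms by real_asymp
qed

lemma monic_cubic_obtain_large_point:
  fixes H :: "int set" and e f g :: real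
  assumes "finite H" "H \<noteq> {}"
  obtains m where "m \<in> H"
    "real ((card H - 1) div 3) ^ 3 \<le> 2 * \<bar>of_int m ^ 3 + e * of_int m ^ 2 + f * of_int m + g\<bar>"
proof -
  define q where "q m = \<bar>of_int m ^ 3 + e * of_int m ^ 2 + f * of_int m + g\<bar>" for m :: int
  have "Max (q ` H) \<in> q ` H"
    using assms by simp
  then obtain m where m: "m \<in> H" "q m = Max (q ` H)"
    by (metis imageE)
  have "q x \<le> q m" if "x \<in> H" for x
    using that m(2) assms(1) by simp
  moreover have "3 * ((card H - 1) div 3) + 1 \<le> card H"
    using assms card_gt_0_iff[of H] by linarith
  ultimately have "real ((card H - 1) div 3) ^ 3 \<le> 2 * q m"
    using assms(1) by (intro monic_cubic_bound_on_int_set) (auto simp: q_def)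
  with m(1) show ?thesis
    by (intro that) (simp_all add: q_def)
qed

lemma monic_cubic_sum_inverse_jbr_powr_le:
  fixes F :: "int set" and e f g \<theta> :: real
  assumes "0 \<le> \<theta>" "finite F"
  shows "(\<Sum>m\<in>F. 1 / jbr (of_int m ^ 3 + e * of_int m ^ 2 + f * of_int m + g) powr \<theta>)
           \<le> (\<Sum>i<card F. 1 / (1 + real (i div 3) ^ 3 / 2) powr \<theta>)"
  using assms(2)
proof (rule sum_le_sum_lessThan_card_if_greedy)
  fix H assume "H \<subseteq> F" "H \<noteq> {}"
  then have H: "finite H" "H \<noteq> {}"
    using assms(2) finite_subset by auto
  define k where "k = (card H - 1) div 3"
  obtain m where "m \<in> H"
    and large: "real k ^ 3 \<le> 2 * \<bar>of_int m ^ 3 + e * of_int m ^ 2 + f * of_int m + g\<bar>"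
    unfolding k_def by (rule monic_cubic_obtain_large_point[OF H])
  have "0 < 1 + real k ^ 3 / 2"
    by (simp add: add_pos_nonneg)
  with large assms(1)
  have "1 / jbr (of_int m ^ 3 + e * of_int m ^ 2 + f * of_int m + g) powr \<theta>
          \<le> 1 / (1 + real k ^ 3 / 2) powr \<theta>"
    unfolding jbr_def by (intro divide_left_mono powr_mono2 mult_pos_pos) auto
  with \<open>m \<in> H\<close> show "\<exists>m\<in>H. 1 / jbr (of_int m ^ 3 + e * of_int m ^ 2 + f * of_int m + g) powr \<theta>
                      \<le> 1 / (1 + real ((card H - 1) div 3) ^ 3 / 2) powr \<theta>"
    unfolding k_def by blast
qed

lemma nonneg_summable_on_infsum_le_if_finite_sums_le:
  fixes w :: "'a \<Rightarrow> real"
  assumes "\<And>x. 0 \<le> w x" "\<And>F. finite F \<Longrightarrow> sum w F \<le> B"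
  shows "w summable_on UNIV \<and> infsum w UNIV \<le> B"
proof
  show summable: "w summable_on UNIV"
    using assms by (intro nonneg_bounded_partial_sums_imp_summable_on eventually_finite_subsets_at_top_weakI)
  show "infsum w UNIV \<le> B"
    using summable assms(2) by (rule infsum_le_finite_sums)
qed

theorem lemma3p2:
  fixes \<theta> :: real
  assumes "\<theta> > 1/3"
  shows "\<exists>C::real. \<forall>e f g :: real.
           (\<lambda>m::int. 1 / (jbr (of_int m ^ 3 + e * of_int m ^ 2 + f * of_int m + g)) powr \<theta>) summable_on UNIV
         \<and> (\<Sum>\<^sub>\<infinity>m::int. 1 / (jbr (of_int m ^ 3 + e * of_int m ^ 2 + f * of_int m + g)) powr \<theta>) \<le> C"
proof -
  define c where "c = (\<lambda>k::nat. 1 / (1 + real k ^ 3 / 2) powr \<theta>)"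
  have c_summable: "summable c" and c_nonneg: "\<And>k. 0 \<le> c k"
    using summable_inverse_powr_cube[OF assms] by (simp_all add: c_def)
  have "(\<Sum>m\<in>F. 1 / jbr (of_int m ^ 3 + e * of_int m ^ 2 + f * of_int m + g) powr \<theta>) \<le> 3 * suminf c"
    if "finite F" for e f g and F :: "int set"
  proof -
    have "(\<Sum>m\<in>F. 1 / jbr (of_int m ^ 3 + e * of_int m ^ 2 + f * of_int m + g) powr \<theta>)
            \<le> (\<Sum>i<card F. c (i div 3))"
      unfolding c_def using assms that by (intro monic_cubic_sum_inverse_jbr_powr_le) auto
    also have "\<dots> \<le> 3 * suminf c"
      using sum_lessThan_div_le_suminf[OF c_summable c_nonneg, of 3] by simp
    finally show ?thesis .
  qed
  then show ?thesis
    by (intro exI allI nonneg_summable_on_infsum_le_if_finite_sums_le) auto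
qed

end
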